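(* For every $\Upsilon\in\{\pi,\theta,\theta_B,\theta_{AB},\Psi\}$, the mapping $d_\Upsilon(N_1,N_2)=\frac12\big(|\Upsilon(N_1)\setminus\Upsilon(N_2)|+|\Upsilon(N_2)\setminus\Upsilon(N_1)|\big)$ defines a distance (up to isomorphism) on the class of all tree-child phylogenetic networks labeled in a fixed finite set $S$ in which no pair of parents of a hybrid node is connected by a path; that is, for all such $N_1,N_2,N_3$: $d_\Upsilon(N_1,N_2)\ge0$; $d_\Upsilon(N_1,N_2)=0$ iff $N_1\cong N_2$; $d_\Upsilon(N_1,N_2)=d_\Upsilon(N_2,N_1)$; and $d_\Upsilon(N_1,N_2)\le d_\Upsilon(N_1,N_3)+d_\Upsilon(N_3,N_2)$.
   Context: A DAG $N=(V,E)$ is labeled in $S$ if its leaves (out-degree 0) are bijectively labeled by $S$; $\cong$ means isomorphism of directed graphs preserving leaf labels. A tree node has in-degree at most 1; a hybrid node has in-degree greater than 1; a tree child is a child that is a tree node. A tree-child phylogenetic network is a rooted DAG labeled in $S$ in which every non-leaf node has at least one tree child, no tree node has out-degree 1, and every hybrid node has out-degree exactly 1. "No pair of parents of a hybrid node is connected by a path": if $u_1,u_2$ are parents of a hybrid node, there is no path $u_1\rightsquigarrow u_2$ nor $u_2\rightsquigarrow u_1$. For a node $v$: $C(v)$ is the set of descendant leaves; $A(v)$ the set of leaves $s$ such that every path from the root to $s$ contains $v$; $B(v)=C(v)\setminus A(v)$. For an arc $e=(u,v)$: $\pi(e)=(C(v),S\setminus C(v))$; $\theta(e)=(A(v),B(v),S\setminus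 C(v))$; $\theta_B(e)$ is $\theta(e)$ with each $s\in B(v)$ weighted by the maximum number of hybrid nodes on a path from $v$ to $s$ (including $v$ and $s$); $\theta_{AB}(e)$ is $\theta(e)$ with each $s\in A(v)\cup B(v)$ so weighted. An arc is a tree arc if its head is a tree node and a network arc otherwise; for a hybrid node $v$, $RS(v)=\{C(u)\mid u\text{ a parent of }v\}$; $\Psi(e)=\theta_{AB}(e)$ for a tree arc, $\Psi(e)=(\theta(e),RS(v))$ for a network arc with head $v$. For each $\Upsilon$, $\Upsilon(N)=\{\Upsilon(e)\mid e\in E\}$. *)

theory Defs
  imports Complex_Main
begin

record ('v, 's) net =
  nodes :: "'v set"
  arcs  :: "('v \<times> 'v) set"
  lab   :: "'v \<Rightarrow> 's"

definition indeg :: "('v,'s) net \<Rightarrow> 'v \<Rightarrow> nat" where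
  "indeg N v = card {u. (u, v) \<in> arcs N}"

definition outdeg :: "('v,'s) net \<Rightarrow> 'v \<Rightarrow> nat" where
  "outdeg N v = card {w. (v, w) \<in> arcs N}"

definition parents :: "('v,'s) net \<Rightarrow> 'v \<Rightarrow> 'v set" where
  "parents N v = {u. (u, v) \<in> arcs N}"

definition children :: "('v,'s) net \<Rightarrow> 'v \<Rightarrow> 'v set" where
  "children N v = {w. (v, w) \<in> arcs N}"

definition leaves :: "('v,'s) net \<Rightarrow> 'v set" where
  "leaves N = {v \<in> nodes N. outdeg N v = 0}"

definition tree_node :: "('v,'s) net \<Rightarrow> 'v \<Rightarrow> bool" where
  "tree_node N v \<longleftrightarrow> v \<in> nodes N \<and> indeg N v \<le> 1"

definition hybrid_node :: "('v,'s) net \<Rightarrow> 'v \<Rightarrow> bool" where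
  "hybrid_node N v \<longleftrightarrow> v \<in> nodes N \<and> indeg N v > 1"

definition rooted_dag :: "('v,'s) net \<Rightarrow> bool" where
  "rooted_dag N \<longleftrightarrow> finite (nodes N) \<and> arcs N \<subseteq> nodes N \<times> nodes N
     \<and> acyclic (arcs N)
     \<and> (\<exists>r \<in> nodes N. \<forall>v \<in> nodes N. (r, v) \<in> (arcs N)\<^sup>*)"

definition root :: "('v,'s) net \<Rightarrow> 'v" where
  "root N = (THE r. r \<in> nodes N \<and> (\<forall>v \<in> nodes N. (r, v) \<in> (arcs N)\<^sup>*))"

definition labeled_in :: "('v,'s) net \<Rightarrow> 's set \<Rightarrow> bool" where
  "labeled_in N S \<longleftrightarrow> bij_betw (lab N) (leaves N) S"

definition tree_child_network :: "'s set \<Rightarrow> ('v,'s) net \<Rightarrow> bool" where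
  "tree_child_network S N \<longleftrightarrow> rooted_dag N \<and> labeled_in N S
     \<and> (\<forall>v \<in> nodes N. v \<notin> leaves N \<longrightarrow> (\<exists>w \<in> children N v. tree_node N w))
     \<and> (\<forall>v \<in> nodes N. tree_node N v \<longrightarrow> outdeg N v \<noteq> 1)
     \<and> (\<forall>v \<in> nodes N. hybrid_node N v \<longrightarrow> outdeg N v = 1)"

definition no_parent_paths :: "('v,'s) net \<Rightarrow> bool" where
  "no_parent_paths N \<longleftrightarrow> (\<forall>v \<in> nodes N. hybrid_node N v \<longrightarrow>
     (\<forall>u1 \<in> parents N v. \<forall>u2 \<in> parents N v. u1 \<noteq> u2 \<longrightarrow> (u1, u2) \<notin> (arcs N)\<^sup>+))"

definition admissible :: "'s set \<Rightarrow> ('v,'s) net \<Rightarrow> bool" where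
  "admissible S N \<longleftrightarrow> tree_child_network S N \<and> no_parent_paths N"

definition net_iso :: "('v,'s) net \<Rightarrow> ('v,'s) net \<Rightarrow> bool" where
  "net_iso N1 N2 \<longleftrightarrow> (\<exists>f. bij_betw f (nodes N1) (nodes N2)
     \<and> (\<forall>u \<in> nodes N1. \<forall>v \<in> nodes N1. (u, v) \<in> arcs N1 \<longleftrightarrow> (f u, f v) \<in> arcs N2)
     \<and> (\<forall>v \<in> leaves N1. lab N2 (f v) = lab N1 v))"

definition is_path :: "('v,'s) net \<Rightarrow> 'v list \<Rightarrow> 'v \<Rightarrow> 'v \<Rightarrow> bool" where
  "is_path N xs u v \<longleftrightarrow> xs \<noteq> [] \<and> hd xs = u \<and> last xs = v \<and> set xs \<subseteq> nodes N
     \<and> (\<forall>i. Suc i < length xs \<longrightarrow> (xs ! i, xs ! Suc i) \<in> arcs N)"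

definition Cl :: "('v,'s) net \<Rightarrow> 'v \<Rightarrow> 's set" where
  "Cl N v = {lab N w | w. w \<in> leaves N \<and> (v, w) \<in> (arcs N)\<^sup>*}"

definition Al :: "('v,'s) net \<Rightarrow> 'v \<Rightarrow> 's set" where
  "Al N v = {lab N w | w. w \<in> leaves N \<and>
     (\<forall>xs. is_path N xs (root N) w \<longrightarrow> v \<in> set xs)}"

definition Bl :: "('v,'s) net \<Rightarrow> 'v \<Rightarrow> 's set" where
  "Bl N v = Cl N v - Al N v"

text \<open>Maximum number of hybrid nodes on a path from v to the leaf labeled s
  (endpoints included).\<close>
definition hweight :: "('v,'s) net \<Rightarrow> 'v \<Rightarrow> 's \<Rightarrow> nat" where
  "hweight N v s = Max {length (filter (hybrid_node N) xs) | xs w.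
      w \<in> leaves N \<and> lab N w = s \<and> is_path N xs v w}"

type_synonym 's wset = "('s \<times> nat) set"

definition weigh :: "('v,'s) net \<Rightarrow> 'v \<Rightarrow> 's set \<Rightarrow> 's wset" where
  "weigh N v X = {(s, hweight N v s) | s. s \<in> X}"

definition pi_arc :: "'s set \<Rightarrow> ('v,'s) net \<Rightarrow> 'v \<times> 'v \<Rightarrow> 's set \<times> 's set" where
  "pi_arc S N e = (Cl N (snd e), S - Cl N (snd e))"

definition theta_arc :: "'s set \<Rightarrow> ('v,'s) net \<Rightarrow> 'v \<times> 'v \<Rightarrow> 's set \<times> 's set \<times> 's set" where
  "theta_arc S N e = (Al N (snd e), Bl N (snd e), S - Cl N (snd e))"

definition thetaB_arc :: "'s set \<Rightarrow> ('v,'s) net \<Rightarrow> 'v \<times> 'v \<Rightarrow> 's set \<times> 's wset \<times> 's set" where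
  "thetaB_arc S N e = (Al N (snd e), weigh N (snd e) (Bl N (snd e)), S - Cl N (snd e))"

definition thetaAB_arc :: "'s set \<Rightarrow> ('v,'s) net \<Rightarrow> 'v \<times> 'v \<Rightarrow> 's wset \<times> 's wset \<times> 's set" where
  "thetaAB_arc S N e = (weigh N (snd e) (Al N (snd e)), weigh N (snd e) (Bl N (snd e)),
                        S - Cl N (snd e))"

definition RS :: "('v,'s) net \<Rightarrow> 'v \<Rightarrow> 's set set" where
  "RS N v = {Cl N u | u. u \<in> parents N v}"

definition Psi_arc :: "'s set \<Rightarrow> ('v,'s) net \<Rightarrow> 'v \<times> 'v \<Rightarrow>
    ('s wset \<times> 's wset \<times> 's set) + (('s set \<times> 's set \<times> 's set) \<times> 's set set)" where
  "Psi_arc S N e = (if tree_node N (snd e) then Inl (thetaAB_arc S N e)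
                    else Inr (theta_arc S N e, RS N (snd e)))"

definition rep_set :: "('s set \<Rightarrow> ('v,'s) net \<Rightarrow> 'v \<times> 'v \<Rightarrow> 'a) \<Rightarrow> 's set \<Rightarrow> ('v,'s) net \<Rightarrow> 'a set" where
  "rep_set U S N = U S N ` arcs N"

definition d_ups :: "('s set \<Rightarrow> ('v,'s) net \<Rightarrow> 'v \<times> 'v \<Rightarrow> 'a) \<Rightarrow> 's set \<Rightarrow>
    ('v,'s) net \<Rightarrow> ('v,'s) net \<Rightarrow> real" where
  "d_ups U S N1 N2 = (real (card (rep_set U S N1 - rep_set U S N2))
                    + real (card (rep_set U S N2 - rep_set U S N1))) / 2"

definition distance_up_to_iso :: "(('v,'s) net \<Rightarrow> bool) \<Rightarrow> (('v,'s) net \<Rightarrow> ('v,'s) net \<Rightarrow> real) \<Rightarrow> bool" where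
  "distance_up_to_iso P d \<longleftrightarrow> (\<forall>N1 N2 N3. P N1 \<and> P N2 \<and> P N3 \<longrightarrow>
      d N1 N2 \<ge> 0
    \<and> (d N1 N2 = 0 \<longleftrightarrow> net_iso N1 N2)
    \<and> d N1 N2 = d N2 N1
    \<and> d N1 N2 \<le> d N1 N3 + d N3 N2)"

end

theory Submission
  imports Defs
begin

(*
  Every one of the five representations is invariant under isomorphism and contains pi:
  its last component S - C(v) determines C(v). So it suffices that pi(N) determines N up to
  isomorphism. The clusters of arc heads, together with S, are exactly the clusters of tree
  nodes, since a hybrid node has the cluster of its unique (tree) child. In a tree-child
  network in which no two parents of a hybrid node are joined by a path, distinct tree
  nodes have distinct clusters, and the minimal strict supersets of the cluster of a tree
  node among all tree clusters are: none for the root, the cluster of the parent if the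
  parent is a tree node, and the clusters of the at least two parents of the parent if it
  is a hybrid node. Hence hybrid nodes, all nodes and all arcs can be read off the set of
  tree clusters. The triangle inequality is that of symmetric differences.
*)

locale rooted_dag_net =
  fixes N :: "('v,'s) net"
  assumes rooted_dag: "rooted_dag N"
begin

abbreviation "V \<equiv> nodes N"
abbreviation "R \<equiv> arcs N"

lemma finite_nodes: "finite V" and arcs_subset: "R \<subseteq> V \<times> V" and acyclic_arcs: "acyclic R"
  and root_exists: "\<exists>r \<in> V. \<forall>v \<in> V. (r, v) \<in> R\<^sup>*"
  using rooted_dag unfolding rooted_dag_def by auto

lemma finite_arcs: "finite R"
  using arcs_subset finite_nodes finite_subset by blast

lemma arc_tail_node: "(u, v) \<in> R \<Longrightarrow> u \<in> V" and arc_head_node: "(u, v) \<in> R \<Longrightarrow> v \<in> V"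
  using arcs_subset by auto

lemma tree_or_hybrid_node: "v \<in> V \<Longrightarrow> tree_node N v \<or> hybrid_node N v"
  unfolding tree_node_def hybrid_node_def by auto

lemma tree_node_not_hybrid: "tree_node N v \<Longrightarrow> \<not> hybrid_node N v"
  unfolding tree_node_def hybrid_node_def by auto

lemma trancl_irrefl: "(x, x) \<notin> R\<^sup>+"
  using acyclic_arcs unfolding acyclic_def by auto

lemma finite_parents: "finite (parents N v)"
proof -
  have "parents N v \<subseteq> fst ` R" unfolding parents_def by force
  then show ?thesis using finite_arcs finite_subset by blast
qed

lemma finite_children: "finite (children N v)"
proof -
  have "children N v \<subseteq> snd ` R" unfolding children_def by force
  then show ?thesis using finite_arcs finite_subset by blast
qed

lemma leaf_iff_no_children: "v \<in> leaves N \<longleftrightarrow> v \<in> V \<and> children N v = {}"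
  using finite_children unfolding leaves_def outdeg_def children_def by auto

lemma root_eqI:
  assumes "r \<in> V" and "\<forall>v \<in> V. (r, v) \<in> R\<^sup>*"
  shows "root N = r"
  unfolding root_def
proof (rule the_equality)
  fix r' assume r': "r' \<in> V \<and> (\<forall>v \<in> V. (r', v) \<in> R\<^sup>*)"
  show "r' = r"
  proof (rule ccontr)
    assume "r' \<noteq> r"
    with assms r' have "(r, r') \<in> R\<^sup>+" "(r', r) \<in> R\<^sup>*" by (auto dest: rtranclD)
    then have "(r, r) \<in> R\<^sup>+" by (rule trancl_rtrancl_trancl)
    then show False using trancl_irrefl by blast
  qed
qed (use assms in blast)

lemma root_reaches: "root N \<in> V" "v \<in> V \<Longrightarrow> (root N, v) \<in> R\<^sup>*"
proof -
  obtain r where "r \<in> V" "\<forall>v \<in> V. (r, v) \<in> R\<^sup>*" using root_exists by blast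
  then show "root N \<in> V" "v \<in> V \<Longrightarrow> (root N, v) \<in> R\<^sup>*" using root_eqI by auto
qed

lemma tree_node_parent_unique: "tree_node N z \<Longrightarrow> (p, z) \<in> R \<Longrightarrow> (q, z) \<in> R \<Longrightarrow> p = q"
proof -
  assume "tree_node N z" "(p, z) \<in> R" "(q, z) \<in> R"
  then have "card (parents N z) \<le> 1" "p \<in> parents N z" "q \<in> parents N z"
    unfolding tree_node_def indeg_def parents_def by auto
  then show ?thesis using finite_parents[of z] by (metis One_nat_def card_le_Suc0_iff_eq)
qed

lemma ancestor_of_tree_node:
  "tree_node N z \<Longrightarrow> (y, z) \<in> R \<Longrightarrow> (q, z) \<in> R\<^sup>+ \<Longrightarrow> (q, y) \<in> R\<^sup>*"
  using tranclD2 tree_node_parent_unique by metis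

lemma wf_converse_arcs: "wf (R\<inverse>)"
  using finite_arcs acyclic_arcs by (simp add: wf_iff_acyclic_if_finite acyclic_converse)

lemma Cl_mono: "(u, v) \<in> R\<^sup>* \<Longrightarrow> Cl N v \<subseteq> Cl N u"
  unfolding Cl_def by (auto intro: rtrancl_trans)

lemma Cl_leaf: "v \<in> leaves N \<Longrightarrow> Cl N v = {lab N v}"
proof -
  assume v: "v \<in> leaves N"
  then have "(v, x) \<in> R\<^sup>* \<Longrightarrow> x = v" for x
    using leaf_iff_no_children unfolding children_def by (auto elim: converse_rtranclE)
  with v show ?thesis unfolding Cl_def by auto
qed

end

definition hybrid_counts :: "('v,'s) net \<Rightarrow> 'v \<Rightarrow> 's \<Rightarrow> nat set" where
  "hybrid_counts N v s = {length (filter (hybrid_node N) xs) | xs w.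
      w \<in> leaves N \<and> lab N w = s \<and> is_path N xs v w}"

lemma hweight_eq_Max_hybrid_counts: "hweight N v s = Max (hybrid_counts N v s)"
  unfolding hweight_def hybrid_counts_def by simp

locale net_isomorphism = N1: rooted_dag_net N1 + N2: rooted_dag_net N2
  for N1 N2 :: "('v,'s) net" +
  fixes f :: "'v \<Rightarrow> 'v"
  assumes bij: "bij_betw f (nodes N1) (nodes N2)"
    and arcs_iff: "\<forall>u \<in> nodes N1. \<forall>v \<in> nodes N1. (u, v) \<in> arcs N1 \<longleftrightarrow> (f u, f v) \<in> arcs N2"
    and lab_eq: "\<forall>v \<in> leaves N1. lab N2 (f v) = lab N1 v"
begin

abbreviation "g \<equiv> inv_into (nodes N1) f"

lemma f_node: "v \<in> nodes N1 \<Longrightarrow> f v \<in> nodes N2"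
  using bij bij_betwE by blast

lemma g_node: "w \<in> nodes N2 \<Longrightarrow> g w \<in> nodes N1"
  using bij by (metis bij_betw_imp_surj_on inv_into_into)

lemma g_f: "v \<in> nodes N1 \<Longrightarrow> g (f v) = v"
  using bij bij_betw_def inv_into_f_f by metis

lemma f_g: "w \<in> nodes N2 \<Longrightarrow> f (g w) = w"
  using bij bij_betw_def f_inv_into_f by metis

lemma arcs_image: "arcs N2 = map_prod f f ` arcs N1"
proof
  show "arcs N2 \<subseteq> map_prod f f ` arcs N1"
  proof
    fix e assume e: "e \<in> arcs N2"
    then obtain x y where xy: "e = (x, y)" "x \<in> nodes N2" "y \<in> nodes N2"
      using N2.arcs_subset by fastforce
    then have "(g x, g y) \<in> arcs N1" using arcs_iff g_node f_g e by metis
    moreover have "e = map_prod f f (g x, g y)" using xy f_g by auto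
    ultimately show "e \<in> map_prod f f ` arcs N1" by blast
  qed
  show "map_prod f f ` arcs N1 \<subseteq> arcs N2" using arcs_iff N1.arcs_subset by auto
qed

lemma parents_image: "v \<in> nodes N1 \<Longrightarrow> parents N2 (f v) = f ` parents N1 v"
proof
  assume v: "v \<in> nodes N1"
  show "parents N2 (f v) \<subseteq> f ` parents N1 v"
  proof
    fix x assume "x \<in> parents N2 (f v)"
    then have x: "(x, f v) \<in> arcs N2" "x \<in> nodes N2" using N2.arc_tail_node unfolding parents_def by auto
    then have "(g x, v) \<in> arcs N1" using arcs_iff g_node f_g v by metis
    then show "x \<in> f ` parents N1 v" using f_g[OF x(2)] unfolding parents_def by force
  qed
  show "f ` parents N1 v \<subseteq> parents N2 (f v)"
  proof
    fix x assume "x \<in> f ` parents N1 v"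
    then obtain w where w: "(w, v) \<in> arcs N1" "x = f w" unfolding parents_def by auto
    then have "(f w, f v) \<in> arcs N2" using arcs_image by force
    then show "x \<in> parents N2 (f v)" using w(2) unfolding parents_def by simp
  qed
qed

lemma children_image: "v \<in> nodes N1 \<Longrightarrow> children N2 (f v) = f ` children N1 v"
proof
  assume v: "v \<in> nodes N1"
  show "children N2 (f v) \<subseteq> f ` children N1 v"
  proof
    fix x assume "x \<in> children N2 (f v)"
    then have x: "(f v, x) \<in> arcs N2" "x \<in> nodes N2" using N2.arc_head_node unfolding children_def by auto
    then have "(v, g x) \<in> arcs N1" using arcs_iff g_node f_g v by metis
    then show "x \<in> f ` children N1 v" using f_g[OF x(2)] unfolding children_def by force
  qed
  show "f ` children N1 v \<subseteq> children N2 (f v)"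
  proof
    fix x assume "x \<in> f ` children N1 v"
    then obtain w where w: "(v, w) \<in> arcs N1" "x = f w" unfolding children_def by auto
    then have "(f v, f w) \<in> arcs N2" using arcs_image by force
    then show "x \<in> children N2 (f v)" using w(2) unfolding children_def by simp
  qed
qed

lemma indeg_eq: "v \<in> nodes N1 \<Longrightarrow> indeg N2 (f v) = indeg N1 v"
proof -
  assume v: "v \<in> nodes N1"
  have "parents N1 v \<subseteq> nodes N1" using N1.arc_tail_node unfolding parents_def by blast
  then have "card (f ` parents N1 v) = card (parents N1 v)"
    using bij card_image inj_on_subset unfolding bij_betw_def by metis
  then show ?thesis using parents_image[OF v] unfolding indeg_def parents_def by simp
qed

lemma outdeg_eq: "v \<in> nodes N1 \<Longrightarrow> outdeg N2 (f v) = outdeg N1 v"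
proof -
  assume v: "v \<in> nodes N1"
  have "children N1 v \<subseteq> nodes N1" using N1.arc_head_node unfolding children_def by blast
  then have "card (f ` children N1 v) = card (children N1 v)"
    using bij card_image inj_on_subset unfolding bij_betw_def by metis
  then show ?thesis using children_image[OF v] unfolding outdeg_def children_def by simp
qed

lemma tree_node_iff: "v \<in> nodes N1 \<Longrightarrow> tree_node N2 (f v) \<longleftrightarrow> tree_node N1 v"
  using indeg_eq f_node unfolding tree_node_def by auto

lemma hybrid_node_iff: "v \<in> nodes N1 \<Longrightarrow> hybrid_node N2 (f v) \<longleftrightarrow> hybrid_node N1 v"
  using indeg_eq f_node unfolding hybrid_node_def by auto

lemma leaf_iff: "v \<in> nodes N1 \<Longrightarrow> f v \<in> leaves N2 \<longleftrightarrow> v \<in> leaves N1"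
  using outdeg_eq f_node unfolding leaves_def by auto

lemma inverse: "net_isomorphism N2 N1 g"
proof
  show "bij_betw g (nodes N2) (nodes N1)" using bij by (rule bij_betw_inv_into)
  show "\<forall>u \<in> nodes N2. \<forall>v \<in> nodes N2. (u, v) \<in> arcs N2 \<longleftrightarrow> (g u, g v) \<in> arcs N1"
    using arcs_iff g_node f_g by metis
  show "\<forall>v \<in> leaves N2. lab N1 (g v) = lab N2 v"
    using lab_eq leaf_iff g_node f_g unfolding leaves_def by (metis (mono_tags, lifting) mem_Collect_eq)
qed

lemma rtrancl_image: "(u, v) \<in> (arcs N1)\<^sup>* \<Longrightarrow> (f u, f v) \<in> (arcs N2)\<^sup>*"
proof (induction rule: rtrancl_induct)
  case (step y z)
  then have "(f y, f z) \<in> arcs N2" using arcs_image by force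
  then show ?case using step.IH by simp
qed simp

lemma path_image: "is_path N1 xs u v \<Longrightarrow> is_path N2 (map f xs) (f u) (f v)"
  unfolding is_path_def using arcs_iff f_node by (auto simp: hd_map last_map subset_iff)

lemma root_image: "root N2 = f (root N1)"
  using N2.root_eqI f_node N1.root_reaches rtrancl_image f_g g_node by metis

lemma Cl_subset: "Cl N1 v \<subseteq> Cl N2 (f v)"
proof
  fix s assume "s \<in> Cl N1 v"
  then obtain w where w: "s = lab N1 w" "w \<in> leaves N1" "(v, w) \<in> (arcs N1)\<^sup>*"
    unfolding Cl_def by auto
  then have "f w \<in> leaves N2" "lab N2 (f w) = s" using leaf_iff lab_eq unfolding leaves_def by auto
  with rtrancl_image[OF w(3)] show "s \<in> Cl N2 (f v)" unfolding Cl_def by blast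
qed

lemma Al_subset: "v \<in> nodes N1 \<Longrightarrow> Al N1 v \<subseteq> Al N2 (f v)"
proof
  fix s assume v: "v \<in> nodes N1" and "s \<in> Al N1 v"
  then obtain w where w: "s = lab N1 w" "w \<in> leaves N1"
    and all: "\<forall>xs. is_path N1 xs (root N1) w \<longrightarrow> v \<in> set xs" unfolding Al_def by auto
  interpret inv: net_isomorphism N2 N1 g by (rule inverse)
  have wV: "w \<in> nodes N1" using w unfolding leaves_def by auto
  have "f v \<in> set ys" if ys: "is_path N2 ys (root N2) (f w)" for ys
  proof -
    have "is_path N1 (map g ys) (root N1) w"
      using inv.path_image[OF ys] root_image g_f N1.root_reaches wV by auto
    with all have "v \<in> set (map g ys)" by blast
    then obtain y where "y \<in> set ys" "v = g y" by auto
    moreover have "set ys \<subseteq> nodes N2" using ys unfolding is_path_def by auto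
    ultimately show "f v \<in> set ys" using f_g by auto
  qed
  then show "s \<in> Al N2 (f v)" using leaf_iff wV w lab_eq unfolding Al_def by force
qed

lemma hybrid_counts_subset: "v \<in> nodes N1 \<Longrightarrow> hybrid_counts N1 v s \<subseteq> hybrid_counts N2 (f v) s"
proof
  fix n assume v: "v \<in> nodes N1" and "n \<in> hybrid_counts N1 v s"
  then obtain xs w where xw: "n = length (filter (hybrid_node N1) xs)" "w \<in> leaves N1"
    "lab N1 w = s" "is_path N1 xs v w" unfolding hybrid_counts_def by auto
  have "set xs \<subseteq> nodes N1" using xw unfolding is_path_def by auto
  then have "filter (hybrid_node N2) (map f xs) = map f (filter (hybrid_node N1) xs)"
    using hybrid_node_iff by (induction xs) auto
  moreover have "f w \<in> leaves N2" "lab N2 (f w) = s" using leaf_iff lab_eq xw unfolding leaves_def by auto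
  ultimately have "n = length (filter (hybrid_node N2) (map f xs))" "f w \<in> leaves N2"
    "lab N2 (f w) = s" "is_path N2 (map f xs) (f v) (f w)"
    using path_image[OF xw(4)] xw(1) by auto
  then show "n \<in> hybrid_counts N2 (f v) s" unfolding hybrid_counts_def by blast
qed

end

context net_isomorphism
begin

lemma Cl_eq: "v \<in> nodes N1 \<Longrightarrow> Cl N2 (f v) = Cl N1 v"
proof -
  assume v: "v \<in> nodes N1"
  interpret inv: net_isomorphism N2 N1 g by (rule inverse)
  show ?thesis using Cl_subset inv.Cl_subset[of "f v"] g_f[OF v] by auto
qed

lemma Al_eq: "v \<in> nodes N1 \<Longrightarrow> Al N2 (f v) = Al N1 v"
proof -
  assume v: "v \<in> nodes N1"
  interpret inv: net_isomorphism N2 N1 g by (rule inverse)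
  show ?thesis using Al_subset[OF v] inv.Al_subset[OF f_node[OF v]] g_f[OF v] by auto
qed

lemma Bl_eq: "v \<in> nodes N1 \<Longrightarrow> Bl N2 (f v) = Bl N1 v"
  unfolding Bl_def using Cl_eq Al_eq by simp

lemma weigh_eq: "v \<in> nodes N1 \<Longrightarrow> weigh N2 (f v) X = weigh N1 v X"
proof -
  assume v: "v \<in> nodes N1"
  interpret inv: net_isomorphism N2 N1 g by (rule inverse)
  have "hybrid_counts N2 (f v) s = hybrid_counts N1 v s" for s
    using hybrid_counts_subset[OF v] inv.hybrid_counts_subset[OF f_node[OF v]] g_f[OF v] by auto
  then show ?thesis unfolding weigh_def hweight_eq_Max_hybrid_counts by simp
qed

lemma RS_eq: "v \<in> nodes N1 \<Longrightarrow> RS N2 (f v) = RS N1 v"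
proof -
  assume v: "v \<in> nodes N1"
  have "Cl N2 (f u) = Cl N1 u" if "u \<in> parents N1 v" for u
    using that Cl_eq N1.arc_tail_node unfolding parents_def by blast
  then have "Cl N2 ` f ` parents N1 v = Cl N1 ` parents N1 v"
    by (simp add: image_image cong: image_cong)
  then show ?thesis using parents_image[OF v] unfolding RS_def by (simp add: setcompr_eq_image)
qed

lemma rep_set_eq:
  assumes "\<And>u v. (u, v) \<in> arcs N1 \<Longrightarrow> U S N2 (f u, f v) = U S N1 (u, v)"
  shows "rep_set U S N2 = rep_set U S N1"
proof -
  have "rep_set U S N2 = (\<lambda>e. U S N2 (map_prod f f e)) ` arcs N1"
    unfolding rep_set_def arcs_image by (simp add: image_image)
  also have "\<dots> = rep_set U S N1"
    unfolding rep_set_def using assms by (auto intro!: image_cong)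
  finally show ?thesis .
qed

lemma rep_sets_eq:
  "rep_set pi_arc S N2 = rep_set pi_arc S N1"
  "rep_set theta_arc S N2 = rep_set theta_arc S N1"
  "rep_set thetaB_arc S N2 = rep_set thetaB_arc S N1"
  "rep_set thetaAB_arc S N2 = rep_set thetaAB_arc S N1"
  "rep_set Psi_arc S N2 = rep_set Psi_arc S N1"
  by (intro rep_set_eq; frule N1.arc_head_node;
      simp add: pi_arc_def theta_arc_def thetaB_arc_def thetaAB_arc_def Psi_arc_def
                Cl_eq Al_eq Bl_eq weigh_eq RS_eq tree_node_iff)+

end

definition tree_arcs :: "('v,'s) net \<Rightarrow> ('v \<times> 'v) set" where
  "tree_arcs N = {(x, y) \<in> arcs N. tree_node N y}"

context rooted_dag_net
begin

abbreviation "T \<equiv> tree_arcs N"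

lemma tree_arcs_subset: "T \<subseteq> R"
  unfolding tree_arcs_def by auto

lemma tree_arcs_trancl: "(x, y) \<in> T\<^sup>+ \<Longrightarrow> (x, y) \<in> R\<^sup>+"
  using trancl_mono tree_arcs_subset by blast

lemma tree_arcs_rtrancl: "(x, y) \<in> T\<^sup>* \<Longrightarrow> (x, y) \<in> R\<^sup>*"
  using rtrancl_mono[OF tree_arcs_subset] by blast

text \<open>Tree nodes have a unique parent, so an ancestor of a node on a tree path from \<open>x\<close>
  either lies on that path or is an ancestor of \<open>x\<close>.\<close>
lemma ancestor_along_tree_path:
  "(x, z) \<in> T\<^sup>* \<Longrightarrow> (q, z) \<in> R\<^sup>* \<Longrightarrow> (q, x) \<in> R\<^sup>* \<or> (x, q) \<in> T\<^sup>+"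
proof (induction arbitrary: q rule: rtrancl_induct)
  case (step y z)
  show ?case
  proof (cases "q = z")
    case True
    then show ?thesis using step.hyps by (meson rtrancl_into_trancl1)
  next
    case False
    then have "(q, z) \<in> R\<^sup>+" using step.prems by (meson rtranclD)
    then have "(q, y) \<in> R\<^sup>*" using ancestor_of_tree_node step.hyps(2) unfolding tree_arcs_def by auto
    then show ?thesis using step.IH by auto
  qed
qed simp

end

locale admissible_net =
  fixes S :: "'s set" and N :: "('v,'s) net"
  assumes admissible: "admissible S N"

sublocale admissible_net \<subseteq> rooted_dag_net N
  using admissible unfolding admissible_def tree_child_network_def by unfold_locales blast

context admissible_net
begin

lemma lab_bij: "bij_betw (lab N) (leaves N) S"
  using admissible unfolding admissible_def tree_child_network_def labeled_in_def by auto

lemma has_tree_child: "v \<in> V \<Longrightarrow> v \<notin> leaves N \<Longrightarrow> \<exists>w \<in> children N v. tree_node N w"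
  and tree_node_outdeg: "v \<in> V \<Longrightarrow> tree_node N v \<Longrightarrow> outdeg N v \<noteq> 1"
  and hybrid_node_outdeg: "v \<in> V \<Longrightarrow> hybrid_node N v \<Longrightarrow> outdeg N v = 1"
  using admissible unfolding admissible_def tree_child_network_def by auto

lemma parents_unconnected:
  "hybrid_node N v \<Longrightarrow> u1 \<in> parents N v \<Longrightarrow> u2 \<in> parents N v \<Longrightarrow> u1 \<noteq> u2 \<Longrightarrow> (u1, u2) \<notin> R\<^sup>+"
  using admissible unfolding admissible_def no_parent_paths_def hybrid_node_def by auto

lemma hybrid_node_child: "hybrid_node N h \<Longrightarrow> \<exists>c. children N h = {c} \<and> tree_node N c"
proof -
  assume h: "hybrid_node N h"
  then have hV: "h \<in> V" unfolding hybrid_node_def by auto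
  have "card (children N h) = 1" using hybrid_node_outdeg[OF hV h] unfolding outdeg_def children_def by simp
  then obtain c where c: "children N h = {c}" by (meson card_1_singletonE)
  then have "h \<notin> leaves N" using leaf_iff_no_children by auto
  then obtain w where "w \<in> children N h" "tree_node N w" using has_tree_child hV by blast
  then show ?thesis using c by auto
qed

lemma hybrid_node_two_parents: "hybrid_node N h \<Longrightarrow> \<exists>a b. a \<in> parents N h \<and> b \<in> parents N h \<and> a \<noteq> b"
proof -
  assume "hybrid_node N h"
  then have "1 < card (parents N h)" unfolding hybrid_node_def indeg_def parents_def by auto
  then show ?thesis using finite_parents[of h] by (metis One_nat_def card_le_Suc0_iff_eq not_le)
qed

lemma hybrid_parent_tree_node: "hybrid_node N h \<Longrightarrow> a \<in> parents N h \<Longrightarrow> tree_node N a"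
proof (rule ccontr)
  assume h: "hybrid_node N h" and a: "a \<in> parents N h" and "\<not> tree_node N a"
  moreover have "a \<in> V" using a arc_tail_node unfolding parents_def by auto
  ultimately have "hybrid_node N a" using tree_or_hybrid_node by blast
  then obtain c where "children N a = {c}" "tree_node N c" using hybrid_node_child by blast
  moreover have "h \<in> children N a" using a unfolding parents_def children_def by auto
  ultimately show False using h tree_node_not_hybrid by auto
qed

lemma tree_node_two_children:
  assumes t: "tree_node N v" and nl: "v \<notin> leaves N"
  shows "\<exists>w w'. (v, w) \<in> R \<and> tree_node N w \<and> (v, w') \<in> R \<and> w \<noteq> w'"
proof -
  have vV: "v \<in> V" using t unfolding tree_node_def by auto
  obtain w where w: "w \<in> children N v" "tree_node N w" using has_tree_child vV nl by blast
  have "outdeg N v \<noteq> 1" "outdeg N v \<noteq> 0" using tree_node_outdeg vV t nl unfolding leaves_def by auto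
  then have "2 \<le> card (children N v)" unfolding outdeg_def children_def by simp
  then have "\<not> children N v \<subseteq> {w}" using card_mono[of "{w}" "children N v"] by auto
  then obtain w' where "w' \<in> children N v" "w' \<noteq> w" by blast
  then show ?thesis using w unfolding children_def by auto
qed

lemma leaf_tree_node: "v \<in> leaves N \<Longrightarrow> tree_node N v"
  using hybrid_node_outdeg tree_or_hybrid_node unfolding leaves_def by fastforce

lemma tree_path_to_leaf: "v \<in> V \<Longrightarrow> \<exists>l \<in> leaves N. (v, l) \<in> T\<^sup>*"
proof (induction v rule: wf_induct_rule[OF wf_converse_arcs])
  case (1 v)
  show ?case
  proof (cases "v \<in> leaves N")
    case False
    then obtain w where w: "(v, w) \<in> R" "tree_node N w"
      using has_tree_child 1(2) unfolding children_def by blast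
    then obtain l where "l \<in> leaves N" "(w, l) \<in> T\<^sup>*" using 1(1) arc_head_node by blast
    moreover have "(v, w) \<in> T" using w unfolding tree_arcs_def by auto
    ultimately show ?thesis by (meson converse_rtrancl_into_rtrancl)
  qed auto
qed

lemma lab_in_Cl_iff: "l \<in> leaves N \<Longrightarrow> lab N l \<in> Cl N v \<longleftrightarrow> (v, l) \<in> R\<^sup>*"
  using lab_bij unfolding Cl_def bij_betw_def by (auto dest: inj_onD)

lemma Cl_subset_S: "Cl N v \<subseteq> S"
  unfolding Cl_def using lab_bij bij_betw_imp_surj_on by blast

lemma Cl_nonempty: "v \<in> V \<Longrightarrow> Cl N v \<noteq> {}"
  using tree_path_to_leaf lab_in_Cl_iff tree_arcs_rtrancl by blast

text \<open>Follow the tree path from \<open>x\<close> to a leaf: every node whose cluster contains \<open>Cl N x\<close>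
  reaches that leaf.\<close>
lemma Cl_superset_ancestor_or_tree_descendant:
  assumes "x \<in> V" and "Cl N x \<subseteq> Cl N v"
  shows "(v, x) \<in> R\<^sup>* \<or> (x, v) \<in> T\<^sup>+"
proof -
  obtain l where l: "l \<in> leaves N" "(x, l) \<in> T\<^sup>*" using tree_path_to_leaf assms(1) by blast
  then have "(v, l) \<in> R\<^sup>*" using assms(2) lab_in_Cl_iff tree_arcs_rtrancl by blast
  then show ?thesis using ancestor_along_tree_path l(2) by blast
qed

lemma siblings_unconnected:
  assumes uw: "(u, w) \<in> R" and w: "tree_node N w" and uw': "(u, w') \<in> R" and "w \<noteq> w'"
  shows "(w, w') \<notin> R\<^sup>+" and "(w', w) \<notin> R\<^sup>+"
proof -
  show "(w, w') \<notin> R\<^sup>+"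
  proof
    assume "(w, w') \<in> R\<^sup>+"
    then obtain p where p: "(w, p) \<in> R\<^sup>*" "(p, w') \<in> R" using tranclD2 by metis
    have up: "(u, p) \<in> R\<^sup>+" using uw p(1) by (meson rtrancl_into_trancl2)
    then have "p \<noteq> u" using trancl_irrefl by blast
    moreover have "hybrid_node N w'"
      using tree_or_hybrid_node arc_head_node[OF uw'] tree_node_parent_unique p(2) uw' \<open>p \<noteq> u\<close>
      by blast
    ultimately show False using parents_unconnected up p(2) uw' unfolding parents_def by blast
  qed
  show "(w', w) \<notin> R\<^sup>+"
  proof
    assume "(w', w) \<in> R\<^sup>+"
    then have "(w', u) \<in> R\<^sup>*" using ancestor_of_tree_node w uw by blast
    then have "(u, u) \<in> R\<^sup>+"
      using uw' by (meson converse_rtrancl_into_rtrancl rtrancl_into_trancl2 rtranclD)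
    then show False using trancl_irrefl by blast
  qed
qed

text \<open>The tree child \<open>w\<close> and another child \<open>w'\<close> of \<open>u\<close> would both have to be
  comparable with \<open>v\<close> by paths, which forces a path between the siblings.\<close>
lemma Cl_psubset_of_tree_ancestor:
  assumes u: "tree_node N u" and uv: "(u, v) \<in> R\<^sup>+"
  shows "Cl N v \<subset> Cl N u"
proof -
  have "Cl N v \<subseteq> Cl N u" using Cl_mono[OF trancl_into_rtrancl[OF uv]] .
  moreover have "\<not> Cl N u \<subseteq> Cl N v"
  proof
    assume sub: "Cl N u \<subseteq> Cl N v"
    have "u \<notin> leaves N" using uv leaf_iff_no_children unfolding children_def by (auto dest: tranclD)
    then obtain w w' where w: "(u, w) \<in> R" "tree_node N w" "(u, w') \<in> R" "w \<noteq> w'"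
      using tree_node_two_children u by blast
    have below_v: "Cl N x \<subseteq> Cl N v" if "(u, x) \<in> R" for x
      using sub Cl_mono[of u x] that by blast
    have wv: "(w, v) \<in> R\<^sup>*"
      using Cl_superset_ancestor_or_tree_descendant[OF arc_head_node[OF w(1)] below_v[OF w(1)]]
    proof
      assume "(v, w) \<in> R\<^sup>*"
      show ?thesis
      proof (rule ccontr)
        assume "(w, v) \<notin> R\<^sup>*"
        with \<open>(v, w) \<in> R\<^sup>*\<close> have "(v, w) \<in> R\<^sup>+" by (metis rtranclD rtrancl.rtrancl_refl)
        then have "(v, u) \<in> R\<^sup>*" using ancestor_of_tree_node w by blast
        then show False using uv trancl_irrefl by (meson trancl_rtrancl_trancl)
      qed
    qed (rule trancl_into_rtrancl[OF tree_arcs_trancl])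
    from Cl_superset_ancestor_or_tree_descendant[OF arc_head_node[OF w(3)] below_v[OF w(3)]]
    show False
    proof
      assume "(v, w') \<in> R\<^sup>*"
      with wv w(4) have "(w, w') \<in> R\<^sup>+" by (meson rtranclD rtrancl_trans)
      then show False using siblings_unconnected w by blast
    next
      assume "(w', v) \<in> T\<^sup>+"
      then have "(w, w') \<in> R\<^sup>* \<or> (w', w) \<in> T\<^sup>+"
        using ancestor_along_tree_path wv by (meson trancl_into_rtrancl)
      then show False using siblings_unconnected w tree_arcs_trancl by (meson rtranclD)
    qed
  qed
  ultimately show ?thesis by blast
qed

lemma tree_node_Cl_inj:
  assumes u: "tree_node N u" and v: "tree_node N v" and eq: "Cl N u = Cl N v"
  shows "u = v"
proof (rule ccontr)
  assume "u \<noteq> v"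
  have "(v, u) \<in> R\<^sup>* \<or> (u, v) \<in> T\<^sup>+"
    using Cl_superset_ancestor_or_tree_descendant u eq unfolding tree_node_def by blast
  then have "(v, u) \<in> R\<^sup>+ \<or> (u, v) \<in> R\<^sup>+" using \<open>u \<noteq> v\<close> tree_arcs_trancl by (auto dest: rtranclD)
  then show False using Cl_psubset_of_tree_ancestor u v eq by blast
qed

lemma tree_node_descendant_if_Cl_psubset:
  assumes c: "tree_node N c" and sub: "Cl N c \<subset> Cl N q"
  shows "(q, c) \<in> R\<^sup>+"
proof -
  have "(q, c) \<in> R\<^sup>* \<or> (c, q) \<in> T\<^sup>+"
    using Cl_superset_ancestor_or_tree_descendant c sub unfolding tree_node_def by blast
  moreover have "\<not> Cl N q \<subseteq> Cl N c" "q \<noteq> c" using sub by auto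
  ultimately show ?thesis using Cl_mono tree_arcs_trancl by (meson rtranclD trancl_into_rtrancl)
qed

lemma tree_node_singleton_Cl_leaf:
  assumes t: "tree_node N v" and c: "Cl N v = {s}"
  shows "v \<in> leaves N"
proof (rule ccontr)
  assume "v \<notin> leaves N"
  then obtain w where w: "(v, w) \<in> R"
    using t leaf_iff_no_children unfolding tree_node_def children_def by auto
  then have "Cl N w \<subseteq> {s}" "Cl N w \<noteq> {}" using Cl_mono c Cl_nonempty arc_head_node by auto
  then have "Cl N w = Cl N v" using c by auto
  then show False using Cl_psubset_of_tree_ancestor t w by blast
qed

lemma hybrid_node_Cl_child: "hybrid_node N h \<Longrightarrow> children N h = {c} \<Longrightarrow> Cl N h = Cl N c"
proof -
  assume h: "hybrid_node N h" and c: "children N h = {c}"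
  then have "h \<notin> leaves N" "(h, c) \<in> R" using leaf_iff_no_children unfolding children_def by auto
  moreover have "(c, x) \<in> R\<^sup>*" if "(h, x) \<in> R\<^sup>*" "x \<in> leaves N" for x
    using that c \<open>h \<notin> leaves N\<close> unfolding children_def by (auto elim: converse_rtranclE)
  ultimately have "Cl N h \<subseteq> Cl N c" "Cl N c \<subseteq> Cl N h" using Cl_mono unfolding Cl_def by auto
  then show ?thesis by blast
qed

lemma hybrid_node_Cl_inj:
  assumes h1: "hybrid_node N h1" and h2: "hybrid_node N h2" and eq: "Cl N h1 = Cl N h2"
  shows "h1 = h2"
proof -
  obtain c1 where c1: "children N h1 = {c1}" "tree_node N c1" using hybrid_node_child h1 by blast
  obtain c2 where c2: "children N h2 = {c2}" "tree_node N c2" using hybrid_node_child h2 by blast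
  have "c1 = c2" using tree_node_Cl_inj c1 c2 hybrid_node_Cl_child h1 h2 eq by metis
  then show ?thesis using tree_node_parent_unique c1 c2 unfolding children_def by blast
qed

end

definition tree_clusters :: "('v,'s) net \<Rightarrow> 's set set" where
  "tree_clusters N = Cl N ` {v. tree_node N v}"

definition min_supersets :: "'a set set \<Rightarrow> 'a set \<Rightarrow> 'a set set" where
  "min_supersets K X = {Y \<in> K. X \<subset> Y \<and> \<not> (\<exists>Z \<in> K. X \<subset> Z \<and> Z \<subset> Y)}"

context admissible_net
begin

lemma min_supersets_eqI:
  assumes U: "\<forall>a \<in> U. tree_node N a \<and> Cl N c \<subset> Cl N a"
    and dominated: "\<forall>q. tree_node N q \<longrightarrow> Cl N c \<subset> Cl N q \<longrightarrow> (\<exists>a \<in> U. (q, a) \<in> R\<^sup>*)"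
    and antichain: "\<forall>a \<in> U. \<forall>a' \<in> U. Cl N a \<subseteq> Cl N a' \<longrightarrow> a = a'"
  shows "min_supersets (tree_clusters N) (Cl N c) = Cl N ` U"
proof
  show "min_supersets (tree_clusters N) (Cl N c) \<subseteq> Cl N ` U"
  proof
    fix Y assume "Y \<in> min_supersets (tree_clusters N) (Cl N c)"
    then obtain q where q: "tree_node N q" "Y = Cl N q" "Cl N c \<subset> Cl N q"
      and min: "\<not> (\<exists>Z \<in> tree_clusters N. Cl N c \<subset> Z \<and> Z \<subset> Cl N q)"
      unfolding min_supersets_def tree_clusters_def by auto
    obtain a where a: "a \<in> U" "(q, a) \<in> R\<^sup>*" using dominated q by blast
    have "Cl N a \<in> tree_clusters N" "Cl N c \<subset> Cl N a"
      using U a(1) unfolding tree_clusters_def by auto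
    with min Cl_mono[OF a(2)] have "Cl N a = Cl N q" by blast
    then show "Y \<in> Cl N ` U" using q a by auto
  qed
  show "Cl N ` U \<subseteq> min_supersets (tree_clusters N) (Cl N c)"
  proof
    fix Y assume "Y \<in> Cl N ` U"
    then obtain a where a: "a \<in> U" "Y = Cl N a" by auto
    have "\<not> (\<exists>Z \<in> tree_clusters N. Cl N c \<subset> Z \<and> Z \<subset> Cl N a)"
    proof
      assume "\<exists>Z \<in> tree_clusters N. Cl N c \<subset> Z \<and> Z \<subset> Cl N a"
      then obtain q where q: "tree_node N q" "Cl N c \<subset> Cl N q" "Cl N q \<subset> Cl N a"
        unfolding tree_clusters_def by auto
      obtain a' where a': "a' \<in> U" "(q, a') \<in> R\<^sup>*" using dominated q by blast
      then have "Cl N a' \<subset> Cl N a" using Cl_mono[OF a'(2)] q(3) by auto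
      then show False using antichain a a' by blast
    qed
    then show "Y \<in> min_supersets (tree_clusters N) (Cl N c)"
      using a U unfolding min_supersets_def tree_clusters_def by auto
  qed
qed

lemma min_supersets_parentless:
  assumes c: "tree_node N c" and "parents N c = {}"
  shows "min_supersets (tree_clusters N) (Cl N c) = {}"
proof -
  have "min_supersets (tree_clusters N) (Cl N c) = Cl N ` {}"
  proof (rule min_supersets_eqI; intro ballI allI impI)
    fix q assume "tree_node N q" "Cl N c \<subset> Cl N q"
    then obtain p where "(p, c) \<in> R"
      using tree_node_descendant_if_Cl_psubset c tranclD2 by metis
    then show "\<exists>a \<in> {}. (q, a) \<in> R\<^sup>*" using \<open>parents N c = {}\<close> unfolding parents_def by auto
  qed auto
  then show ?thesis by simp
qed

lemma min_supersets_tree_parent: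
  assumes c: "tree_node N c" and pc: "(p, c) \<in> R" and p: "tree_node N p"
  shows "min_supersets (tree_clusters N) (Cl N c) = {Cl N p}"
proof -
  have "min_supersets (tree_clusters N) (Cl N c) = Cl N ` {p}"
  proof (rule min_supersets_eqI)
    show "\<forall>q. tree_node N q \<longrightarrow> Cl N c \<subset> Cl N q \<longrightarrow> (\<exists>a \<in> {p}. (q, a) \<in> R\<^sup>*)"
      using tree_node_descendant_if_Cl_psubset c ancestor_of_tree_node pc by blast
  qed (use p Cl_psubset_of_tree_ancestor pc in auto)
  then show ?thesis by simp
qed

lemma min_supersets_hybrid_parent:
  assumes c: "tree_node N c" and hc: "(h, c) \<in> R" and h: "hybrid_node N h"
  shows "min_supersets (tree_clusters N) (Cl N c) = Cl N ` parents N h"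
proof (rule min_supersets_eqI)
  show "\<forall>a \<in> parents N h. tree_node N a \<and> Cl N c \<subset> Cl N a"
  proof
    fix a assume a: "a \<in> parents N h"
    then have "(a, c) \<in> R\<^sup>+" using hc unfolding parents_def by auto
    then show "tree_node N a \<and> Cl N c \<subset> Cl N a"
      using hybrid_parent_tree_node[OF h a] Cl_psubset_of_tree_ancestor by blast
  qed
  show "\<forall>q. tree_node N q \<longrightarrow> Cl N c \<subset> Cl N q \<longrightarrow> (\<exists>a \<in> parents N h. (q, a) \<in> R\<^sup>*)"
  proof (intro allI impI)
    fix q assume q: "tree_node N q" "Cl N c \<subset> Cl N q"
    then have "(q, h) \<in> R\<^sup>*"
      using tree_node_descendant_if_Cl_psubset c ancestor_of_tree_node hc by blast
    moreover have "q \<noteq> h" using q h tree_node_not_hybrid by blast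
    ultimately obtain a where "(q, a) \<in> R\<^sup>*" "(a, h) \<in> R" by (metis rtranclD tranclD2)
    then show "\<exists>a \<in> parents N h. (q, a) \<in> R\<^sup>*" unfolding parents_def by auto
  qed
  show "\<forall>a \<in> parents N h. \<forall>a' \<in> parents N h. Cl N a \<subseteq> Cl N a' \<longrightarrow> a = a'"
  proof (intro ballI impI)
    fix a a' assume a: "a \<in> parents N h" and a': "a' \<in> parents N h" and sub: "Cl N a \<subseteq> Cl N a'"
    then have "(a', a) \<in> R\<^sup>* \<or> (a, a') \<in> T\<^sup>+"
      using Cl_superset_ancestor_or_tree_descendant arc_tail_node unfolding parents_def by blast
    then show "a = a'"
      using parents_unconnected[OF h a' a] parents_unconnected[OF h a a'] tree_arcs_trancl
      by (auto dest: rtranclD)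
  qed
qed

lemma two_le_card_parent_clusters: "hybrid_node N h \<Longrightarrow> 2 \<le> card (Cl N ` parents N h)"
proof -
  assume h: "hybrid_node N h"
  obtain a b where ab: "a \<in> parents N h" "b \<in> parents N h" "a \<noteq> b"
    using hybrid_node_two_parents h by blast
  then have "Cl N a \<noteq> Cl N b" using tree_node_Cl_inj hybrid_parent_tree_node h by blast
  then have "card {Cl N a, Cl N b} = 2" by simp
  moreover have "{Cl N a, Cl N b} \<subseteq> Cl N ` parents N h" using ab by auto
  ultimately show ?thesis using finite_parents by (metis card_mono finite_imageI)
qed

lemma tree_node_parent_cases:
  assumes "tree_node N v"
  obtains "parents N v = {}" | p where "(p, v) \<in> R" "tree_node N p"
    | p where "(p, v) \<in> R" "hybrid_node N p"
  using tree_or_hybrid_node arc_tail_node unfolding parents_def by blast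

lemma arc_iff_tree_tree:
  assumes u: "tree_node N u" and v: "tree_node N v"
  shows "(u, v) \<in> R \<longleftrightarrow> min_supersets (tree_clusters N) (Cl N v) = {Cl N u}"
proof
  assume "(u, v) \<in> R"
  then show "min_supersets (tree_clusters N) (Cl N v) = {Cl N u}"
    using min_supersets_tree_parent u v by blast
next
  assume M: "min_supersets (tree_clusters N) (Cl N v) = {Cl N u}"
  from v show "(u, v) \<in> R"
  proof (cases rule: tree_node_parent_cases)
    case 1
    then show ?thesis using min_supersets_parentless v M by simp
  next
    case (2 p)
    then have "Cl N p = Cl N u" using min_supersets_tree_parent v M by simp
    then show ?thesis using tree_node_Cl_inj 2 u by blast
  next
    case (3 p)
    then have "2 \<le> card (min_supersets (tree_clusters N) (Cl N v))"
      using min_supersets_hybrid_parent v two_le_card_parent_clusters by simp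
    then show ?thesis using M by simp
  qed
qed

lemma arc_iff_tree_hybrid:
  assumes u: "tree_node N u" and v: "hybrid_node N v"
  shows "(u, v) \<in> R \<longleftrightarrow> Cl N u \<in> min_supersets (tree_clusters N) (Cl N v)"
proof -
  obtain c where c: "children N v = {c}" "tree_node N c" using hybrid_node_child v by blast
  moreover have "(v, c) \<in> R" using c(1) unfolding children_def by auto
  ultimately have "min_supersets (tree_clusters N) (Cl N v) = Cl N ` parents N v"
    using hybrid_node_Cl_child min_supersets_hybrid_parent v by metis
  moreover have "Cl N u \<in> Cl N ` parents N v \<longleftrightarrow> u \<in> parents N v"
    using tree_node_Cl_inj u hybrid_parent_tree_node v by blast
  ultimately show ?thesis unfolding parents_def by simp
qed

lemma arc_iff_hybrid_tree:
  assumes u: "hybrid_node N u" and v: "tree_node N v"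
  shows "(u, v) \<in> R \<longleftrightarrow> Cl N u = Cl N v"
proof -
  obtain c where c: "children N u = {c}" "tree_node N c" using hybrid_node_child u by blast
  then have "(u, v) \<in> R \<longleftrightarrow> v = c" unfolding children_def by blast
  also have "\<dots> \<longleftrightarrow> Cl N u = Cl N v" using tree_node_Cl_inj v c hybrid_node_Cl_child u by metis
  finally show ?thesis .
qed

lemma no_arc_hybrid_hybrid: "hybrid_node N u \<Longrightarrow> hybrid_node N v \<Longrightarrow> (u, v) \<notin> R"
proof
  assume u: "hybrid_node N u" and v: "hybrid_node N v" and "(u, v) \<in> R"
  then obtain c where "children N u = {c}" "tree_node N c" "v \<in> children N u"
    using hybrid_node_child unfolding children_def by blast
  then show False using v tree_node_not_hybrid by auto
qed

text \<open>The minimal strict supersets of a hybrid cluster are the clusters of the parents.\<close>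
lemma hybrid_cluster_iff:
  "(\<exists>h. hybrid_node N h \<and> Cl N h = X)
     \<longleftrightarrow> X \<in> tree_clusters N \<and> 2 \<le> card (min_supersets (tree_clusters N) X)"
proof
  assume "\<exists>h. hybrid_node N h \<and> Cl N h = X"
  then obtain h where h: "hybrid_node N h" "Cl N h = X" by blast
  obtain c where c: "children N h = {c}" "tree_node N c" using hybrid_node_child h by blast
  moreover have "(h, c) \<in> R" using c(1) unfolding children_def by auto
  ultimately have "Cl N h = Cl N c" "min_supersets (tree_clusters N) (Cl N c) = Cl N ` parents N h"
    using hybrid_node_Cl_child min_supersets_hybrid_parent h by metis+
  then show "X \<in> tree_clusters N \<and> 2 \<le> card (min_supersets (tree_clusters N) X)"
    using two_le_card_parent_clusters h c unfolding tree_clusters_def by auto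
next
  assume X: "X \<in> tree_clusters N \<and> 2 \<le> card (min_supersets (tree_clusters N) X)"
  then obtain c where c: "tree_node N c" "X = Cl N c" unfolding tree_clusters_def by auto
  from c(1) show "\<exists>h. hybrid_node N h \<and> Cl N h = X"
  proof (cases rule: tree_node_parent_cases)
    case 1
    then show ?thesis using min_supersets_parentless[OF c(1)] c X by simp
  next
    case (2 p)
    then show ?thesis using min_supersets_tree_parent[OF c(1)] c X by simp
  next
    case (3 p)
    then obtain c' where c': "children N p = {c'}" using hybrid_node_child by blast
    then have "c' = c" using 3(1) unfolding children_def by auto
    then show ?thesis using hybrid_node_Cl_child[OF 3(2) c'] 3(2) c(2) by blast
  qed
qed

lemma root_tree_node: "tree_node N (root N)"
proof -
  have "(p, root N) \<notin> R" for p
    using root_reaches arc_tail_node trancl_irrefl by (meson rtrancl_into_trancl1)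
  then show ?thesis using root_reaches unfolding tree_node_def indeg_def by simp
qed

lemma Cl_root: "Cl N (root N) = S"
proof
  show "S \<subseteq> Cl N (root N)"
  proof
    fix s assume "s \<in> S"
    then obtain w where "w \<in> leaves N" "s = lab N w" using lab_bij by (metis bij_betw_imp_surj_on imageE)
    then show "s \<in> Cl N (root N)" using root_reaches lab_in_Cl_iff unfolding leaves_def by auto
  qed
qed (rule Cl_subset_S)

lemma tree_clusters_eq_pi: "tree_clusters N = insert S (fst ` rep_set pi_arc S N)"
proof -
  have pi: "fst ` rep_set pi_arc S N = Cl N ` snd ` R"
    unfolding rep_set_def pi_arc_def by (auto simp: image_image)
  have "Cl N v \<in> insert S (Cl N ` snd ` R)" if v: "tree_node N v" for v
  proof (cases "v = root N")
    case False
    have "(root N, v) \<in> R\<^sup>*" using root_reaches v unfolding tree_node_def by blast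
    then obtain p where "(p, v) \<in> R" using False by (blast elim: rtranclE)
    then have "v \<in> snd ` R" by (metis image_eqI snd_conv)
    then show ?thesis by simp
  qed (simp add: Cl_root)
  moreover have "Cl N v \<in> tree_clusters N" if "(u, v) \<in> R" for u v
    using tree_or_hybrid_node[OF arc_head_node[OF that]]
  proof
    assume h: "hybrid_node N v"
    then obtain c where c: "children N v = {c}" "tree_node N c" using hybrid_node_child by blast
    then show ?thesis using hybrid_node_Cl_child[OF h c(1)] unfolding tree_clusters_def by auto
  qed (auto simp: tree_clusters_def)
  ultimately show ?thesis
    using root_tree_node Cl_root unfolding pi tree_clusters_def by auto
qed

end

text \<open>A node is identified by its kind and its cluster; which such pairs occur, and which of
  them are joined by arcs, depends only on the set of tree clusters.\<close>
definition node_sig :: "('v,'s) net \<Rightarrow> 'v \<Rightarrow> bool \<times> 's set" where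
  "node_sig N v = (tree_node N v, Cl N v)"

definition cluster_signatures :: "'s set set \<Rightarrow> (bool \<times> 's set) set" where
  "cluster_signatures K = Pair True ` K \<union> Pair False ` {X \<in> K. 2 \<le> card (min_supersets K X)}"

definition arc_signature :: "'s set set \<Rightarrow> bool \<times> 's set \<Rightarrow> bool \<times> 's set \<Rightarrow> bool" where
  "arc_signature K a b \<longleftrightarrow> (case (a, b) of
      ((True, X), (True, Y)) \<Rightarrow> min_supersets K Y = {X}
    | ((True, X), (False, Y)) \<Rightarrow> X \<in> min_supersets K Y
    | ((False, X), (True, Y)) \<Rightarrow> X = Y
    | ((False, _), (False, _)) \<Rightarrow> False)"

context admissible_net
begin

lemma node_sig_bij: "bij_betw (node_sig N) V (cluster_signatures (tree_clusters N))"
proof (rule bij_betwI')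
  fix u v assume u: "u \<in> V" and v: "v \<in> V"
  show "node_sig N u = node_sig N v \<longleftrightarrow> u = v"
  proof
    assume "node_sig N u = node_sig N v"
    then have kind: "tree_node N u \<longleftrightarrow> tree_node N v" and Cl: "Cl N u = Cl N v"
      unfolding node_sig_def by auto
    show "u = v"
    proof (cases "tree_node N u")
      case True
      then show ?thesis using tree_node_Cl_inj kind Cl by blast
    next
      case False
      then have "hybrid_node N u" "hybrid_node N v" using kind tree_or_hybrid_node u v by blast+
      then show ?thesis using hybrid_node_Cl_inj Cl by blast
    qed
  qed simp
next
  fix v assume v: "v \<in> V"
  show "node_sig N v \<in> cluster_signatures (tree_clusters N)"
  proof (cases "tree_node N v")
    case True
    then show ?thesis unfolding node_sig_def cluster_signatures_def tree_clusters_def by auto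
  next
    case False
    then have "hybrid_node N v" using tree_or_hybrid_node v by blast
    then have "\<exists>h. hybrid_node N h \<and> Cl N h = Cl N v" by blast
    then have "Cl N v \<in> {X \<in> tree_clusters N. 2 \<le> card (min_supersets (tree_clusters N) X)}"
      unfolding hybrid_cluster_iff by simp
    moreover have "node_sig N v = Pair False (Cl N v)" using False unfolding node_sig_def by simp
    ultimately show ?thesis unfolding cluster_signatures_def by (intro UnI2) (rule image_eqI)
  qed
next
  fix y assume "y \<in> cluster_signatures (tree_clusters N)"
  then consider (tree) X where "y = (True, X)" "X \<in> tree_clusters N"
    | (hybrid) X where "y = (False, X)" "X \<in> tree_clusters N"
        "2 \<le> card (min_supersets (tree_clusters N) X)"
    unfolding cluster_signatures_def by auto
  then show "\<exists>v \<in> V. y = node_sig N v"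
  proof cases
    case tree
    then show ?thesis unfolding tree_clusters_def node_sig_def tree_node_def by auto
  next
    case hybrid
    then obtain h where "hybrid_node N h" "Cl N h = X" using hybrid_cluster_iff by blast
    then show ?thesis using hybrid(1) tree_node_not_hybrid unfolding node_sig_def hybrid_node_def by auto
  qed
qed

lemma arc_iff_arc_signature:
  assumes "u \<in> V" and "v \<in> V"
  shows "(u, v) \<in> R \<longleftrightarrow> arc_signature (tree_clusters N) (node_sig N u) (node_sig N v)"
  using tree_or_hybrid_node[OF assms(1)] tree_or_hybrid_node[OF assms(2)]
    tree_node_not_hybrid arc_iff_tree_tree arc_iff_tree_hybrid arc_iff_hybrid_tree no_arc_hybrid_hybrid
  unfolding node_sig_def arc_signature_def by (cases "tree_node N u"; cases "tree_node N v") auto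

lemma rep_set_pi_eq_image:
  assumes "\<And>e. c (U S N e) = S - Cl N (snd e)"
  shows "rep_set pi_arc S N = (\<lambda>z. (S - c z, c z)) ` rep_set U S N"
proof -
  have "pi_arc S N e = (S - c (U S N e), c (U S N e))" for e
    using assms Cl_subset_S unfolding pi_arc_def by (simp add: Diff_Diff_Int inf.absorb2)
  then show ?thesis unfolding rep_set_def by (simp add: image_image)
qed

end

theorem net_iso_if_tree_clusters_eq:
  assumes A1: "admissible S N1" and A2: "admissible S N2"
    and K: "tree_clusters N1 = tree_clusters N2"
  shows "net_iso N1 N2"
proof -
  interpret N1: admissible_net S N1 by (rule admissible_net.intro[OF A1])
  interpret N2: admissible_net S N2 by (rule admissible_net.intro[OF A2])
  define f where "f = inv_into (nodes N2) (node_sig N2) \<circ> node_sig N1"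
  have bij: "bij_betw f (nodes N1) (nodes N2)"
    unfolding f_def using N1.node_sig_bij[unfolded K] bij_betw_inv_into[OF N2.node_sig_bij]
    by (rule bij_betw_trans)
  have sig: "node_sig N2 (f v) = node_sig N1 v" if "v \<in> nodes N1" for v
  proof -
    have "node_sig N1 ` nodes N1 = node_sig N2 ` nodes N2"
      using N1.node_sig_bij N2.node_sig_bij K by (simp add: bij_betw_def)
    then have "node_sig N1 v \<in> node_sig N2 ` nodes N2" using that by blast
    then show ?thesis unfolding f_def by (simp add: f_inv_into_f)
  qed
  have "(u, v) \<in> arcs N1 \<longleftrightarrow> (f u, f v) \<in> arcs N2" if "u \<in> nodes N1" "v \<in> nodes N1" for u v
    using that N1.arc_iff_arc_signature N2.arc_iff_arc_signature sig bij_betwE[OF bij] K by simp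
  moreover have "lab N2 (f v) = lab N1 v" if v: "v \<in> leaves N1" for v
  proof -
    have "v \<in> nodes N1" using v unfolding leaves_def by simp
    then have "tree_node N2 (f v)" "Cl N2 (f v) = {lab N1 v}"
      using sig N1.leaf_tree_node[OF v] N1.Cl_leaf[OF v] unfolding node_sig_def by auto
    then show ?thesis using N2.tree_node_singleton_Cl_leaf N2.Cl_leaf by fastforce
  qed
  ultimately show ?thesis unfolding net_iso_def using bij by blast
qed

lemma card_Diff_triangle:
  assumes "finite A" "finite B" "finite C"
  shows "card (A - B) \<le> card (A - C) + card (C - B)"
proof -
  have "card (A - B) \<le> card ((A - C) \<union> (C - B))"
    using assms by (intro card_mono) auto
  also have "\<dots> \<le> card (A - C) + card (C - B)" by (rule card_Un_le)
  finally show ?thesis .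
qed

lemma d_ups_nonneg: "0 \<le> d_ups U S N1 N2"
  unfolding d_ups_def by simp

lemma d_ups_commute: "d_ups U S N1 N2 = d_ups U S N2 N1"
  unfolding d_ups_def by simp

lemma d_ups_triangle:
  fixes U :: "'s set \<Rightarrow> ('v,'s) net \<Rightarrow> 'v \<times> 'v \<Rightarrow> 'a"
  assumes "finite (arcs N1)" "finite (arcs N2)" "finite (arcs N3)"
  shows "d_ups U S N1 N2 \<le> d_ups U S N1 N3 + d_ups U S N3 N2"
proof -
  have "finite (rep_set U S N)" if "finite (arcs N)" for N :: "('v,'s) net"
    using that unfolding rep_set_def by simp
  then show ?thesis
    using assms card_Diff_triangle[of "rep_set U S N1" "rep_set U S N2" "rep_set U S N3"]
      card_Diff_triangle[of "rep_set U S N2" "rep_set U S N1" "rep_set U S N3"]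
    unfolding d_ups_def by (simp add: field_simps)
qed

lemma d_ups_eq_0_iff:
  assumes "finite (arcs N1)" "finite (arcs N2)"
  shows "d_ups U S N1 N2 = 0 \<longleftrightarrow> rep_set U S N1 = rep_set U S N2"
  using assms unfolding d_ups_def rep_set_def by (auto simp: add_nonneg_eq_0_iff)

text \<open>Each representation recovers \<open>\<pi>\<close> through its component \<open>c\<close>, and \<open>\<pi>(N)\<close> already
  determines an admissible network up to isomorphism.\<close>
lemma distance_up_to_iso_admissible:
  fixes U :: "'s set \<Rightarrow> ('v,'s) net \<Rightarrow> 'v \<times> 'v \<Rightarrow> 'a" and c :: "'a \<Rightarrow> 's set"
  assumes invariant: "\<And>N1 N2 f. net_isomorphism N1 N2 f \<Longrightarrow> rep_set U S N2 = rep_set U S N1"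
    and complement: "\<And>N e. c (U S N e) = S - Cl N (snd e)"
  shows "distance_up_to_iso (admissible S) (d_ups U S)"
  unfolding distance_up_to_iso_def
proof (intro allI impI conjI)
  fix N1 N2 N3 :: "('v,'s) net"
  assume "admissible S N1 \<and> admissible S N2 \<and> admissible S N3"
  then interpret N1: admissible_net S N1 + N2: admissible_net S N2 + N3: admissible_net S N3
    by (simp_all add: admissible_net.intro)
  show "0 \<le> d_ups U S N1 N2" "d_ups U S N1 N2 = d_ups U S N2 N1"
    by (rule d_ups_nonneg, rule d_ups_commute)
  show "d_ups U S N1 N2 \<le> d_ups U S N1 N3 + d_ups U S N3 N2"
    using N1.finite_arcs N2.finite_arcs N3.finite_arcs by (rule d_ups_triangle)
  have "d_ups U S N1 N2 = 0 \<longleftrightarrow> rep_set U S N1 = rep_set U S N2"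
    using N1.finite_arcs N2.finite_arcs by (rule d_ups_eq_0_iff)
  also have "\<dots> \<longleftrightarrow> net_iso N1 N2"
  proof
    assume "rep_set U S N1 = rep_set U S N2"
    then have "tree_clusters N1 = tree_clusters N2"
      using N1.rep_set_pi_eq_image N2.rep_set_pi_eq_image complement
        N1.tree_clusters_eq_pi N2.tree_clusters_eq_pi by metis
    then show "net_iso N1 N2"
      using net_iso_if_tree_clusters_eq N1.admissible N2.admissible by blast
  next
    assume "net_iso N1 N2"
    then obtain f where "net_isomorphism N1 N2 f"
      unfolding net_iso_def net_isomorphism_def net_isomorphism_axioms_def
      using N1.rooted_dag_net_axioms N2.rooted_dag_net_axioms by blast
    then show "rep_set U S N1 = rep_set U S N2" using invariant by metis
  qed
  finally show "d_ups U S N1 N2 = 0 \<longleftrightarrow> net_iso N1 N2" .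
qed

theorem corollary10:
  fixes S :: "'s set"
  assumes "finite S"
  shows "distance_up_to_iso (admissible S :: ('v,'s) net \<Rightarrow> bool) (d_ups pi_arc S)
       \<and> distance_up_to_iso (admissible S :: ('v,'s) net \<Rightarrow> bool) (d_ups theta_arc S)
       \<and> distance_up_to_iso (admissible S :: ('v,'s) net \<Rightarrow> bool) (d_ups thetaB_arc S)
       \<and> distance_up_to_iso (admissible S :: ('v,'s) net \<Rightarrow> bool) (d_ups thetaAB_arc S)
       \<and> distance_up_to_iso (admissible S :: ('v,'s) net \<Rightarrow> bool) (d_ups Psi_arc S)"
proof (intro conjI)
  show "distance_up_to_iso (admissible S :: ('v,'s) net \<Rightarrow> bool) (d_ups pi_arc S)"
    by (rule distance_up_to_iso_admissible[where c = snd])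
      (simp_all add: net_isomorphism.rep_sets_eq pi_arc_def)
  show "distance_up_to_iso (admissible S :: ('v,'s) net \<Rightarrow> bool) (d_ups theta_arc S)"
    by (rule distance_up_to_iso_admissible[where c = "snd \<circ> snd"])
      (simp_all add: net_isomorphism.rep_sets_eq theta_arc_def)
  show "distance_up_to_iso (admissible S :: ('v,'s) net \<Rightarrow> bool) (d_ups thetaB_arc S)"
    by (rule distance_up_to_iso_admissible[where c = "snd \<circ> snd"])
      (simp_all add: net_isomorphism.rep_sets_eq thetaB_arc_def)
  show "distance_up_to_iso (admissible S :: ('v,'s) net \<Rightarrow> bool) (d_ups thetaAB_arc S)"
    by (rule distance_up_to_iso_admissible[where c = "snd \<circ> snd"])
      (simp_all add: net_isomorphism.rep_sets_eq thetaAB_arc_def)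
  show "distance_up_to_iso (admissible S :: ('v,'s) net \<Rightarrow> bool) (d_ups Psi_arc S)"
    by (rule distance_up_to_iso_admissible[where c = "case_sum (snd \<circ> snd) (snd \<circ> snd \<circ> fst)"])
      (simp_all add: net_isomorphism.rep_sets_eq Psi_arc_def thetaAB_arc_def theta_arc_def)
qed

end
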